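(* Let $T$ be a centered CQCA with matrix $\mathbf{a}$ and let $\omega_\xi$ be a pure translation-invariant stabilizer state. Let $E(\omega_\xi,t)$ denote the bipartite entanglement of the evolved state $\omega_\xi\circ T^t$ (again a pure translation-invariant stabilizer state). Then the asymptotic entanglement generation rate $$\lim_{t\to\infty}\frac1t E(\omega_\xi,t)$$ equals $\deg(\mathrm{tr}\,\mathbf{a})$, the highest exponent occurring in the trace polynomial $\mathrm{tr}\,\mathbf{a}$ (taken to be $0$ if $\mathrm{tr}\,\mathbf{a}$ is constant).
   Context: $\mathcal{P}$ = Laurent polynomials in $u$ over $\mathbb{Z}_2$, $\mathcal{R}$ its palindromes ($p(u^{-1})=p(u)$). Pauli products on the chain $\bigotimes_{x\in\mathbb{Z}}M_2$ are labelled by $\xi\in\mathcal{P}^2$: $W(\xi)=\bigotimes_xW(\xi_+(x),\xi_-(x))$, $W(0,0)=\mathbb{1},W(1,0)=\sigma_1,W(0,1)=\sigma_3,W(1,1)=-i\sigma_2$. A CQCA is a translation-commuting automorphism of the chain algebra mapping Pauli products to multiples of Pauli products, $T(W(\xi))=\lambda(\xi)W(\mathbf{a}\xi)$, $|\lambda|=1$; it is centered if $\mathbf{a}$ has entries in $\mathcal{R}$ and determinant 1. For reflection-invariant $\xi$ with $\gcd(\xi_+,\xi_-)=1$, $\omega_\xi$ is the unique state with $\omega_\xi=1$ on the group $\mathcal{S}$ generated by the translates of $W(\xi)$. Bipartite entanglement $E(\omega)$ of such a state: for a cut into left half-chain $A$ and right half-chain $B$, the maximal number of pairs $(W(\eta^i),W(\zeta^i))$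 of elements of the stabilizer group supported on both sides whose restrictions to $A$ anticommute within each pair, commute between different pairs, and commute with all stabilizer elements supported in $A$ (the number of maximally entangled qubit pairs across the cut; it is independent of the cut). *)

theory Defs
  imports "HOL-Analysis.Analysis" "HOL-Library.Poly_Mapping" "HOL-Library.Z2"
    "HOL-Library.Extended_Nat"
begin

text \<open>Laurent polynomials in u over Z_2: finitely supported maps from exponents (int)
  to Z_2, with convolution product (the library ring structure of poly_mapping).\<close>
type_synonym lpoly = "int \<Rightarrow>\<^sub>0 bit"

type_synonym pvec = "lpoly \<times> lpoly"

text \<open>2x2 matrices over P, entries (a_pp, a_pm, a_mp, a_mm).\<close>
type_synonym pmat = "lpoly \<times> lpoly \<times> lpoly \<times> lpoly"

definition palindrome :: "lpoly \<Rightarrow> bool" where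
  "palindrome p \<longleftrightarrow> (\<forall>n. Poly_Mapping.lookup p (- n) = Poly_Mapping.lookup p n)"

definition mapply :: "pmat \<Rightarrow> pvec \<Rightarrow> pvec" where
  "mapply a \<xi> = (case a of (app, apm, amp, amm) \<Rightarrow>
      (app * fst \<xi> + apm * snd \<xi>, amp * fst \<xi> + amm * snd \<xi>))"

definition mtrace :: "pmat \<Rightarrow> lpoly" where
  "mtrace a = (case a of (app, apm, amp, amm) \<Rightarrow> app + amm)"

definition mdet :: "pmat \<Rightarrow> lpoly" where
  "mdet a = (case a of (app, apm, amp, amm) \<Rightarrow> app * amm - apm * amp)"

definition centered :: "pmat \<Rightarrow> bool" where
  "centered a \<longleftrightarrow> (case a of (app, apm, amp, amm) \<Rightarrow>
      palindrome app \<and> palindrome apm \<and> palindrome amp \<and> palindrome amm) \<and> mdet a = 1"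

text \<open>gcd(p,q) = 1 in P: every common divisor is a unit (library coprime, unfolded,
  since poly_mapping is not registered as an algebraic_semidom).\<close>
definition lcoprime :: "lpoly \<Rightarrow> lpoly \<Rightarrow> bool" where
  "lcoprime p q \<longleftrightarrow> (\<forall>d. d dvd p \<longrightarrow> d dvd q \<longrightarrow> d dvd 1)"

definition ldeg :: "lpoly \<Rightarrow> int" where
  "ldeg p = Max (insert 0 (Poly_Mapping.keys p))"

text \<open>Support (set of sites) of the Pauli product W(xi).\<close>
definition psupp :: "pvec \<Rightarrow> int set" where
  "psupp \<xi> = Poly_Mapping.keys (fst \<xi>) \<union> Poly_Mapping.keys (snd \<xi>)"

text \<open>Symplectic commutation form of the restrictions of W(xi), W(eta) to the region A:
  the restrictions commute iff this is 0 and anticommute iff it is 1.\<close>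
definition symp_on :: "int set \<Rightarrow> pvec \<Rightarrow> pvec \<Rightarrow> bit" where
  "symp_on A \<xi> \<eta> = (\<Sum>x \<in> A \<inter> psupp \<xi>.
      Poly_Mapping.lookup (fst \<xi>) x * Poly_Mapping.lookup (snd \<eta>) x + Poly_Mapping.lookup (snd \<xi>) x * Poly_Mapping.lookup (fst \<eta>) x)"

text \<open>Labels (up to phase) of the stabilizer group generated by the translates of W(xi):
  the Z_2-span of u^k xi, i.e. all f xi with f in P.\<close>
definition stab_labels :: "pvec \<Rightarrow> pvec set" where
  "stab_labels \<xi> = {(f * fst \<xi>, f * snd \<xi>) | f. True}"

text \<open>Labels of the stabilizer group of the evolved state omega_xi o T^t, where
  T(W(eta)) = lambda(eta) W(a eta): W(eta) is a stabilizer (up to phase) of omega o T^t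
  iff a^t eta is a stabilizer label of omega.\<close>
definition evolved_stab :: "pmat \<Rightarrow> pvec \<Rightarrow> nat \<Rightarrow> pvec set" where
  "evolved_stab a \<xi> t = {\<eta>. (mapply a ^^ t) \<eta> \<in> stab_labels \<xi>}"

text \<open>n entangled pairs across the cut A = {x < c}, B = {x >= c} for stabilizer group S.\<close>
definition ent_pairs :: "int \<Rightarrow> pvec set \<Rightarrow> nat \<Rightarrow> bool" where
  "ent_pairs c S n \<longleftrightarrow> (\<exists>\<eta> \<zeta> :: nat \<Rightarrow> pvec.
     (\<forall>i<n. \<eta> i \<in> S \<and> \<zeta> i \<in> S) \<and>
     (\<forall>i<n. psupp (\<eta> i) \<inter> {..<c} \<noteq> {} \<and> psupp (\<eta> i) \<inter> {c..} \<noteq> {} \<and>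
            psupp (\<zeta> i) \<inter> {..<c} \<noteq> {} \<and> psupp (\<zeta> i) \<inter> {c..} \<noteq> {}) \<and>
     (\<forall>i<n. symp_on {..<c} (\<eta> i) (\<zeta> i) = 1) \<and>
     (\<forall>i<n. \<forall>j<n. i \<noteq> j \<longrightarrow>
        symp_on {..<c} (\<eta> i) (\<eta> j) = 0 \<and> symp_on {..<c} (\<eta> i) (\<zeta> j) = 0 \<and>
        symp_on {..<c} (\<zeta> i) (\<eta> j) = 0 \<and> symp_on {..<c} (\<zeta> i) (\<zeta> j) = 0) \<and>
     (\<forall>i<n. \<forall>g\<in>S. psupp g \<subseteq> {..<c} \<longrightarrow>
        symp_on {..<c} (\<eta> i) g = 0 \<and> symp_on {..<c} (\<zeta> i) g = 0))"

definition entanglement :: "int \<Rightarrow> pvec set \<Rightarrow> enat" where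
  "entanglement c S = Sup (enat ` {n. ent_pairs c S n})"

end

theory Submission
  imports Defs
begin

text \<open>The stabilizer group of \<open>\<omega>\<^sub>\<xi> \<circ> T\<^sup>t\<close> is generated by the translates of
  \<open>W(z\<^sub>t)\<close> with \<open>z\<^sub>t = (adj a)\<^sup>t \<xi>\<close>, again a palindromic unimodular vector, and by
  Cayley--Hamilton \<open>z\<^sub>t\<^sub>+\<^sub>2 = (tr a) z\<^sub>t\<^sub>+\<^sub>1 + z\<^sub>t\<close>.
  For such a vector \<open>z\<close> the entanglement across any cut equals its half-width \<open>D\<close>, the largest
  site in its support.  Transport the commutation form of the left half-chain to coefficient
  polynomials \<open>f \<mapsto> f z\<close>.  On polynomials supported in the window of the \<open>2D\<close> sites around the
  cut it is nondegenerate, because the labels \<open>f z\<close> form a Lagrangian subspace; a symplectic basis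
  of this \<open>2D\<close>-dimensional space gives \<open>D\<close> entangled pairs.  Conversely, entangled pairs stay
  independent modulo polynomials vanishing on the window, so there are at most \<open>D\<close> of them.
  Finally the recurrence lets the half-width grow by exactly \<open>deg (tr a)\<close> per step as soon as the
  leading term of \<open>(tr a) z\<^sub>t\<^sub>+\<^sub>1\<close> sticks out, hence \<open>D\<^sub>t = t deg (tr a) + O(1)\<close>.\<close>

section \<open>Laurent polynomials over \<open>\<int>\<^sub>2\<close>\<close>

text \<open>Keep \<open>bit\<close> arithmetic in ring form instead of turning it into \<open>xor\<close>/\<open>and\<close>.\<close>
declare add_bit_eq_xor [simp del] mult_bit_eq_and [simp del]

abbreviation coeff :: "lpoly \<Rightarrow> int \<Rightarrow> bit" where "coeff \<equiv> Poly_Mapping.lookup"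
abbreviation keys :: "lpoly \<Rightarrow> int set" where "keys \<equiv> Poly_Mapping.keys"

lemma bit_add_self [simp]: "(b::bit) + b = 0"
  by (cases b) simp_all

lemma lpoly_add_self [simp]: "(p::lpoly) + p = 0"
  by (rule poly_mapping_eqI) (simp only: lookup_add bit_add_self lookup_zero)

lemma lpoly_add_eq_0_iff: "(p::lpoly) + q = 0 \<longleftrightarrow> p = q"
  by (metis add.assoc add.right_neutral lpoly_add_self)

lemma lpoly_two_eq_zero [simp]: "(2::lpoly) = 0"
  by (metis one_add_one lpoly_add_self)

lemma lpoly_diff_eq_add: "(p::lpoly) - q = p + q"
  by (rule poly_mapping_eqI) (simp only: lookup_minus lookup_add minus_bit_def)

lemma in_keys_iff_coeff_eq_1: "k \<in> keys p \<longleftrightarrow> coeff p k = 1"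
  by (simp add: in_keys_iff)

lemma lpoly_eqI_keys: "keys p = keys q \<Longrightarrow> p = q"
  by (rule poly_mapping_eqI) (metis in_keys_iff_coeff_eq_1 not_in_keys_iff_lookup_eq_zero)

lemma coeff_mult: "coeff (f * g) k = (\<Sum>l\<in>keys f. coeff f l * coeff g (k - l))"
proof -
  have shift: "Sum_any (\<lambda>q. coeff g q when k = l + q) = coeff g (k - l)" for l
  proof -
    have "Sum_any (\<lambda>q. coeff g q when k = l + q) = Sum_any (\<lambda>q. coeff g q when q = k - l)"
      by (rule Sum_any.cong) (auto simp: when_def)
    then show ?thesis by simp
  qed
  have "coeff (f * g) k = Sum_any (\<lambda>l. coeff f l * coeff g (k - l))"
    unfolding lookup_mult shift ..
  also have "\<dots> = (\<Sum>l\<in>keys f. coeff f l * coeff g (k - l))"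
    by (rule Sum_any.expand_superset) (auto simp: in_keys_iff)
  finally show ?thesis .
qed

abbreviation upow :: "int \<Rightarrow> lpoly" where "upow k \<equiv> Poly_Mapping.single k 1"

lemma coeff_upow_mult: "coeff (upow j * p) k = coeff p (k - j)"
  by (simp add: coeff_mult lookup_single)

lemma keys_upow_mult: "k \<in> keys (upow j * p) \<longleftrightarrow> k - j \<in> keys p"
  by (simp add: in_keys_iff coeff_upow_mult)

definition reflect :: "lpoly \<Rightarrow> lpoly" where
  "reflect p = Poly_Mapping.map_key uminus p"

lemma coeff_reflect [simp]: "coeff (reflect p) k = coeff p (- k)"
  by (simp add: reflect_def map_key.rep_eq)

lemma keys_reflect: "keys (reflect p) = uminus ` keys p"
  by (force simp: in_keys_iff image_iff)

lemma reflect_add: "reflect (p + q) = reflect p + reflect q"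
  by (rule poly_mapping_eqI) (simp add: lookup_add)

lemma reflect_mult: "reflect (p * q) = reflect p * reflect q"
proof (rule poly_mapping_eqI)
  fix k
  have swap: "- l - k = - k - l" for l :: int by simp
  have "coeff (reflect p * reflect q) k
      = (\<Sum>l\<in>uminus ` keys p. coeff p (- l) * coeff q (l - k))"
    by (simp add: coeff_mult keys_reflect)
  also have "\<dots> = (\<Sum>l\<in>keys p. coeff p l * coeff q (- k - l))"
    by (simp add: sum.reindex inj_on_def swap)
  also have "\<dots> = coeff (reflect (p * q)) k"
    by (simp add: coeff_mult)
  finally show "coeff (reflect (p * q)) k = coeff (reflect p * reflect q) k" by simp
qed

lemma reflect_upow: "reflect (upow k) = upow (- k)"
  by (rule poly_mapping_eqI) (auto simp: lookup_single when_def)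

lemma palindrome_iff_reflect: "palindrome p \<longleftrightarrow> reflect p = p"
  unfolding palindrome_def poly_mapping_eq_iff by (auto simp: fun_eq_iff)

lemma palindrome_add: "palindrome p \<Longrightarrow> palindrome q \<Longrightarrow> palindrome (p + q)"
  by (simp add: palindrome_iff_reflect reflect_add)

lemma palindrome_mult: "palindrome p \<Longrightarrow> palindrome q \<Longrightarrow> palindrome (p * q)"
  by (simp add: palindrome_iff_reflect reflect_mult)

lemma palindrome_uminus_in_keys: "palindrome p \<Longrightarrow> k \<in> keys p \<Longrightarrow> - k \<in> keys p"
  by (simp add: palindrome_def in_keys_iff)

lemma coeff_mult_reflect_zero:
  assumes "finite K" "keys p \<subseteq> K"
  shows "coeff (p * reflect q) 0 = (\<Sum>k\<in>K. coeff p k * coeff q k)"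
proof -
  have "coeff (p * reflect q) 0 = (\<Sum>k\<in>keys p. coeff p k * coeff q k)"
    by (simp add: coeff_mult)
  also have "\<dots> = (\<Sum>k\<in>K. coeff p k * coeff q k)"
    by (rule sum.mono_neutral_left) (use assms in \<open>auto simp: in_keys_iff\<close>)
  finally show ?thesis .
qed

lemma unique_sum_in_keys_mult:
  assumes l0: "l0 \<in> keys f" and m0: "m0 \<in> keys g"
    and unique: "\<And>l m. l \<in> keys f \<Longrightarrow> m \<in> keys g \<Longrightarrow> l + m = l0 + m0 \<Longrightarrow> l = l0"
  shows "l0 + m0 \<in> keys (f * g)"
proof -
  have "coeff (f * g) (l0 + m0) = coeff f l0 * coeff g m0
      + (\<Sum>l\<in>keys f - {l0}. coeff f l * coeff g (l0 + m0 - l))"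
    using l0 by (simp add: coeff_mult sum.remove)
  also have "(\<Sum>l\<in>keys f - {l0}. coeff f l * coeff g (l0 + m0 - l)) = 0"
    using unique by (intro sum.neutral) (force simp: in_keys_iff)
  finally show ?thesis
    using l0 m0 by (simp add: in_keys_iff_coeff_eq_1)
qed

lemma Max_keys_mult:
  assumes "f \<noteq> 0" "g \<noteq> 0"
  shows "Max (keys f) + Max (keys g) \<in> keys (f * g)"
proof (rule unique_sum_in_keys_mult)
  fix l m assume "l \<in> keys f" "m \<in> keys g" "l + m = Max (keys f) + Max (keys g)"
  moreover from \<open>l \<in> keys f\<close> \<open>m \<in> keys g\<close> have "l \<le> Max (keys f)" "m \<le> Max (keys g)"
    by simp_all
  ultimately show "l = Max (keys f)" by linarith
qed (use assms in simp_all)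

lemma Min_keys_mult:
  assumes "f \<noteq> 0" "g \<noteq> 0"
  shows "Min (keys f) + Min (keys g) \<in> keys (f * g)"
proof (rule unique_sum_in_keys_mult)
  fix l m assume "l \<in> keys f" "m \<in> keys g" "l + m = Min (keys f) + Min (keys g)"
  moreover from \<open>l \<in> keys f\<close> \<open>m \<in> keys g\<close> have "Min (keys f) \<le> l" "Min (keys g) \<le> m"
    by simp_all
  ultimately show "l = Min (keys f)" by linarith
qed (use assms in simp_all)

lemma in_keys_mult_obtain:
  assumes "k \<in> keys (f * g)"
  obtains l m where "l \<in> keys f" "m \<in> keys g" "k = l + m"
  using keys_mult[of f g] assms by blast

definition lrestrict :: "int set \<Rightarrow> lpoly \<Rightarrow> lpoly" where
  "lrestrict A p = Abs_poly_mapping (\<lambda>k. if k \<in> A then coeff p k else 0)"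

lemma coeff_lrestrict [simp]: "coeff (lrestrict A p) k = (if k \<in> A then coeff p k else 0)"
proof -
  have "finite {k. (if k \<in> A then coeff p k else 0) \<noteq> 0}"
    by (rule finite_subset[OF _ finite_keys[of p]]) (auto simp: in_keys_iff)
  then show ?thesis
    unfolding lrestrict_def by simp
qed

lemma keys_lrestrict: "keys (lrestrict A p) = A \<inter> keys p"
  by (auto simp: in_keys_iff split: if_splits)

lemma keys_diff_disjoint_if_lrestrict_eq:
  "lrestrict A p = lrestrict A q \<Longrightarrow> A \<inter> keys (p - q) = {}"
  by (auto simp: poly_mapping_eq_iff fun_eq_iff in_keys_iff lpoly_diff_eq_add lookup_add
      split: if_splits)

lemma lrestrict_split:
  assumes "lo \<le> hi" "keys p \<inter> {lo..<hi} = {}"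
  shows "p = lrestrict {..<lo} p + lrestrict {hi..} p"
proof (rule poly_mapping_eqI)
  fix k
  show "coeff p k = coeff (lrestrict {..<lo} p + lrestrict {hi..} p) k"
    using assms by (cases "k < lo"; cases "k < hi") (auto simp: lookup_add in_keys_iff)
qed

lemma card_lpoly_keys_subset:
  assumes "finite W"
  shows "card {p. keys p \<subseteq> W} = 2 ^ card W"
proof -
  have "bij_betw keys {p. keys p \<subseteq> W} (Pow W)"
  proof (rule bij_betw_imageI)
    show "inj_on keys {p. keys p \<subseteq> W}"
      by (rule inj_onI) (rule lpoly_eqI_keys)
    have "K \<in> keys ` {p. keys p \<subseteq> W}" if "K \<subseteq> W" for K
    proof -
      have fin: "finite {k. (of_bool (k \<in> K) :: bit) \<noteq> 0}"
        using finite_subset[OF that assms] by simp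
      have "keys (Abs_poly_mapping (\<lambda>k. of_bool (k \<in> K))) = K"
        by (auto simp: in_keys_iff lookup_Abs_poly_mapping[OF fin])
      with that show ?thesis by force
    qed
    then show "keys ` {p. keys p \<subseteq> W} = Pow W" by auto
  qed
  then show ?thesis
    using assms by (simp add: bij_betw_same_card card_Pow)
qed

lemma finite_lpoly_keys_subset: "finite W \<Longrightarrow> finite {p. keys p \<subseteq> W}"
  by (rule card_ge_0_finite) (simp add: card_lpoly_keys_subset)

text \<open>Laurent polynomials over \<open>\<int>\<^sub>2\<close> form a Euclidean domain for the width of the support;
  this gives Bezout coefficients for \<open>lcoprime\<close> polynomials.\<close>
definition width :: "lpoly \<Rightarrow> nat" where
  "width p = nat (Max (keys p) - Min (keys p))"

lemma lpoly_division:
  assumes "g \<noteq> 0"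
  shows "\<exists>s r. p = s * g + r \<and> (r = 0 \<or> width r < width g)"
proof (induction "width p" arbitrary: p rule: less_induct)
  case less
  show ?case
  proof (cases "p = 0 \<or> width p < width g")
    case True
    then show ?thesis by (metis add_0 mult_zero_left)
  next
    case False
    then have p: "p \<noteq> 0" and wide: "width g \<le> width p" by auto
    let ?Mp = "Max (keys p)" and ?mp = "Min (keys p)"
    let ?Mg = "Max (keys g)" and ?mg = "Min (keys g)"
    have bounds: "?mp \<le> ?Mp" "?mg \<le> ?Mg"
      using p assms by (simp_all add: Min_le_iff)
    define p' where "p' = p + upow (?Mp - ?Mg) * g"
    txt \<open>Adding the aligned multiple of \<open>g\<close> cancels the top coefficient of \<open>p\<close>.\<close>
    have keys_p': "keys p' \<subseteq> {?mp..?Mp - 1}"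
    proof
      fix k assume k: "k \<in> keys p'"
      then have "k \<in> keys p \<or> k - (?Mp - ?Mg) \<in> keys g"
        using keys_add[of p "upow (?Mp - ?Mg) * g"] by (auto simp: p'_def keys_upow_mult)
      moreover have "?Mg - ?mg \<le> ?Mp - ?mp"
        using wide bounds unfolding width_def by (simp add: nat_le_eq_zle)
      ultimately have "?mp \<le> k \<and> k \<le> ?Mp"
        by (auto dest: Max_ge[rotated] Min_le[rotated])
      moreover have "k \<noteq> ?Mp"
      proof -
        have "coeff p ?Mp = 1" "coeff g ?Mg = 1"
          using p assms by (simp_all flip: in_keys_iff_coeff_eq_1)
        with k show ?thesis
          by (auto simp: p'_def lookup_add coeff_upow_mult in_keys_iff_coeff_eq_1)
      qed
      ultimately show "k \<in> {?mp..?Mp - 1}" by auto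
    qed
    have "\<exists>s r. p' = s * g + r \<and> (r = 0 \<or> width r < width g)"
    proof (cases "p' = 0")
      case True
      then show ?thesis by (metis add_0 mult_zero_left)
    next
      case False
      then have "Max (keys p') \<in> keys p'" "Min (keys p') \<in> keys p'"
        by simp_all
      then have "Max (keys p') \<in> {?mp..?Mp - 1}" "Min (keys p') \<in> {?mp..?Mp - 1}"
        using keys_p' by blast+
      then have "width p' < width p"
        unfolding width_def by auto
      then show ?thesis by (rule less)
    qed
    then obtain s r where sr: "p' = s * g + r" "r = 0 \<or> width r < width g" by blast
    have "p = p' + upow (?Mp - ?Mg) * g"
      by (simp add: p'_def add.assoc)
    then have "p = (s + upow (?Mp - ?Mg)) * g + r"
      using sr(1) by (simp add: algebra_simps)
    then show ?thesis using sr(2) by blast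
  qed
qed

lemma lcoprime_imp_bezout:
  assumes "lcoprime p q"
  obtains a b where "a * p + b * q = 1"
proof -
  define I where "I = {g. \<exists>a b. g = a * p + b * q}"
  have "p = 1 * p + 0 * q" "q = 0 * p + 1 * q"
    by simp_all
  then have "p \<in> I" "q \<in> I"
    unfolding I_def by blast+
  moreover have "p \<noteq> 0 \<or> q \<noteq> 0"
  proof (rule ccontr)
    assume "\<not> (p \<noteq> 0 \<or> q \<noteq> 0)"
    with assms have "(0::lpoly) dvd 1"
      unfolding lcoprime_def by auto
    then show False by simp
  qed
  ultimately obtain g0 where "g0 \<in> I - {0}" by blast
  then obtain g where g: "g \<in> I - {0}" and g_min: "\<And>h. h \<in> I - {0} \<Longrightarrow> width g \<le> width h"
    using ex_has_least_nat[of "\<lambda>h. h \<in> I - {0}" g0 width] by blast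
  then obtain a b where gab: "g = a * p + b * q" unfolding I_def by blast
  txt \<open>A remainder of an element of the ideal modulo \<open>g\<close> lies in the ideal, so it vanishes.\<close>
  have "g dvd h" if "h \<in> I" for h
  proof -
    obtain c d where h: "h = c * p + d * q" using \<open>h \<in> I\<close> unfolding I_def by blast
    obtain s r where sr: "h = s * g + r" "r = 0 \<or> width r < width g"
      using lpoly_division g by blast
    have "r = h + s * g"
      by (simp add: sr(1) add.assoc)
    also have "\<dots> = (c + s * a) * p + (d + s * b) * q"
      by (simp add: h gab algebra_simps)
    finally have "r \<in> I"
      unfolding I_def by blast
    with sr(2) g_min have "r = 0"
      by (metis Diff_iff empty_iff insert_iff leD)
    with sr(1) show ?thesis by simp
  qed
  with \<open>p \<in> I\<close> \<open>q \<in> I\<close> assms have "g dvd 1"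
    unfolding lcoprime_def by blast
  then obtain e where "1 = g * e" by (elim dvdE)
  then have "(e * a) * p + (e * b) * q = 1"
    by (simp add: gab algebra_simps)
  then show ?thesis by (rule that)
qed

section \<open>Phase space and the commutation form\<close>

definition pscale :: "lpoly \<Rightarrow> pvec \<Rightarrow> pvec" where
  "pscale f v = (f * fst v, f * snd v)"

lemma stab_labels_eq_range: "stab_labels \<xi> = range (\<lambda>f. pscale f \<xi>)"
  by (auto simp: stab_labels_def pscale_def)

lemma pscale_add: "pscale (f + g) v = pscale f v + pscale g v"
  by (simp add: pscale_def distrib_right)

lemma finite_psupp [simp]: "finite (psupp v)"
  by (simp add: psupp_def)

lemma psupp_eq_empty_iff: "psupp v = {} \<longleftrightarrow> v = 0"
  by (cases v) (auto simp: psupp_def zero_prod_def)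

lemma coeff_outside_psupp: "x \<notin> psupp v \<Longrightarrow> coeff (fst v) x = 0 \<and> coeff (snd v) x = 0"
  by (auto simp: psupp_def in_keys_iff)

lemma psupp_add_subset: "psupp (v + w) \<subseteq> psupp v \<union> psupp w"
  using keys_add[of "fst v" "fst w"] keys_add[of "snd v" "snd w"] by (auto simp: psupp_def)

lemma in_psupp_add_left:
  assumes "x \<in> psupp v" "x \<notin> psupp w"
  shows "x \<in> psupp (v + w)"
proof -
  have "coeff (fst (v + w)) x = coeff (fst v) x" "coeff (snd (v + w)) x = coeff (snd v) x"
    using coeff_outside_psupp[OF assms(2)] by (simp_all add: lookup_add)
  with assms(1) show ?thesis
    by (simp add: psupp_def in_keys_iff)
qed

lemma in_psupp_pscale_obtain:
  assumes "x \<in> psupp (pscale h z)"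
  obtains k y where "k \<in> keys h" "y \<in> psupp z" "x = k + y"
  using assms by (auto simp: psupp_def pscale_def elim!: in_keys_mult_obtain)

lemma symp_on_eq_sum:
  assumes "finite K" "psupp v \<inter> psupp w \<subseteq> K"
  shows "symp_on A v w = (\<Sum>x\<in>A \<inter> K.
      coeff (fst v) x * coeff (snd w) x + coeff (snd v) x * coeff (fst w) x)"
    (is "_ = sum ?term _")
proof -
  have vanish: "?term x = 0" if "x \<notin> psupp v \<or> x \<notin> psupp w" for x
    using that coeff_outside_psupp[of x v] coeff_outside_psupp[of x w] by auto
  have "symp_on A v w = sum ?term (A \<inter> (psupp v \<inter> psupp w))"
    unfolding symp_on_def by (rule sum.mono_neutral_right) (auto intro: vanish)
  also have "\<dots> = sum ?term (A \<inter> K)"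
    using assms by (intro sum.mono_neutral_left) (auto intro: vanish)
  finally show ?thesis .
qed

lemma symp_on_commute: "symp_on A v w = symp_on A w v"
  by (simp add: symp_on_eq_sum[of "psupp v"] symp_on_eq_sum[of "psupp v" w v] ac_simps)

lemma symp_on_self [simp]: "symp_on A v v = 0"
  unfolding symp_on_def by (rule sum.neutral) (simp add: mult.commute)

lemma symp_on_add_left: "symp_on A (v + v') w = symp_on A v w + symp_on A v' w"
proof -
  let ?K = "psupp v \<union> psupp v'"
  have "psupp (v + v') \<inter> psupp w \<subseteq> ?K"
    using psupp_add_subset by blast
  moreover have "psupp v \<inter> psupp w \<subseteq> ?K" "psupp v' \<inter> psupp w \<subseteq> ?K"
    by auto
  ultimately show ?thesis
    by (simp add: symp_on_eq_sum[of ?K] sum.distrib[symmetric] lookup_add algebra_simps)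
qed

lemma symp_on_disjoint: "A \<inter> psupp v = {} \<Longrightarrow> symp_on A v w = 0"
  unfolding symp_on_def by simp

lemma symp_on_eq_UNIV: "psupp v \<subseteq> A \<Longrightarrow> symp_on A v w = symp_on UNIV v w"
  unfolding symp_on_def by (simp add: Int_absorb1 Int_absorb2)

lemma symp_on_UNIV_eq_coeff:
  "symp_on UNIV v w = coeff (fst v * reflect (snd w) + snd v * reflect (fst w)) 0"
  by (simp add: symp_on_eq_sum[of "psupp v"] lookup_add sum.distrib
      coeff_mult_reflect_zero[of "psupp v"] psupp_def)

lemma symp_on_UNIV_pscale_palindrome:
  assumes "palindrome (fst z)" "palindrome (snd z)"
  shows "symp_on UNIV (pscale f z) (pscale g z) = 0"
proof -
  have swap: "f * fst z * reflect (g * snd z) = f * snd z * reflect (g * fst z)"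
    using assms by (simp add: reflect_mult palindrome_iff_reflect ac_simps)
  show ?thesis
    unfolding symp_on_UNIV_eq_coeff pscale_def fst_conv snd_conv swap by simp
qed

lemma symp_on_UNIV_pscale_upow:
  assumes "palindrome (fst z)" "palindrome (snd z)"
  shows "symp_on UNIV v (pscale (upow k) z) = coeff (fst v * snd z + snd v * fst z) k"
proof -
  have "coeff (p * reflect (upow k * q)) 0 = coeff (p * q) k" if "palindrome q" for p q
    using that by (simp add: reflect_mult reflect_upow palindrome_iff_reflect
        mult.left_commute[of p] coeff_upow_mult)
  with assms show ?thesis
    by (simp add: symp_on_UNIV_eq_coeff pscale_def lookup_add)
qed

definition prestrict :: "int set \<Rightarrow> pvec \<Rightarrow> pvec" where
  "prestrict A v = (lrestrict A (fst v), lrestrict A (snd v))"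

lemma psupp_prestrict: "psupp (prestrict A v) = A \<inter> psupp v"
  by (auto simp: psupp_def prestrict_def in_keys_iff split: if_splits)

lemma symp_on_prestrict: "symp_on A v w = symp_on UNIV (prestrict A v) w"
  unfolding symp_on_def psupp_prestrict by (simp add: prestrict_def)

lemma psupp_add_prestrict_disjoint: "A \<inter> psupp (v + prestrict A v) = {}"
  by (auto simp: psupp_def prestrict_def in_keys_iff lookup_add)

section \<open>Dynamics\<close>

text \<open>Over \<open>\<int>\<^sub>2\<close> the adjugate of a \<open>2 \<times> 2\<close> matrix needs no signs.\<close>
definition adj :: "pmat \<Rightarrow> pmat" where
  "adj a = (case a of (app, apm, amp, amm) \<Rightarrow> (amm, apm, amp, app))"

lemma mdet_eq_1_iff: "mdet (app, apm, amp, amm) = 1 \<longleftrightarrow> app * amm + apm * amp = 1"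
  by (simp add: mdet_def lpoly_diff_eq_add)

lemma mapply_adj_mapply:
  assumes "mdet a = 1"
  shows "mapply (adj a) (mapply a v) = v"
proof -
  obtain x y z w where a: "a = (x, y, z, w)" by (cases a)
  obtain v1 v2 where v: "v = (v1, v2)" by fastforce
  have det: "x * w + y * z = 1" using assms by (simp add: a mdet_eq_1_iff)
  have "w * (x * v1 + y * v2) + y * (z * v1 + w * v2) = (x * w + y * z) * v1 + 2 * (w * y * v2)"
    "z * (x * v1 + y * v2) + x * (z * v1 + w * v2) = (x * w + y * z) * v2 + 2 * (x * z * v1)"
    by (simp_all add: algebra_simps)
  then show ?thesis by (simp add: a v adj_def mapply_def det)
qed

lemma mapply_mapply_adj:
  assumes "mdet a = 1"
  shows "mapply a (mapply (adj a) v) = v"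
proof -
  obtain x y z w where a: "a = (x, y, z, w)" by (cases a)
  obtain v1 v2 where v: "v = (v1, v2)" by fastforce
  have det: "x * w + y * z = 1" using assms by (simp add: a mdet_eq_1_iff)
  have "x * (w * v1 + y * v2) + y * (z * v1 + x * v2) = (x * w + y * z) * v1 + 2 * (x * y * v2)"
    "z * (w * v1 + y * v2) + w * (z * v1 + x * v2) = (x * w + y * z) * v2 + 2 * (w * z * v1)"
    by (simp_all add: algebra_simps)
  then show ?thesis by (simp add: a v adj_def mapply_def det)
qed

text \<open>Cayley--Hamilton for \<open>adj a\<close>, whose trace is that of \<open>a\<close> and whose determinant is 1.\<close>
lemma mapply_adj_twice:
  assumes "mdet a = 1"
  shows "mapply (adj a) (mapply (adj a) v) = pscale (mtrace a) (mapply (adj a) v) + v"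
proof -
  obtain x y z w where a: "a = (x, y, z, w)" by (cases a)
  obtain v1 v2 where v: "v = (v1, v2)" by fastforce
  have det: "x * w + y * z = 1" using assms by (simp add: a mdet_eq_1_iff)
  have "w * (w * v1 + y * v2) + y * (z * v1 + x * v2)
      = (x + w) * (w * v1 + y * v2) + (x * w + y * z) * v1 + 2 * (x * w * v1)"
    "z * (w * v1 + y * v2) + x * (z * v1 + x * v2)
      = (x + w) * (z * v1 + x * v2) + (x * w + y * z) * v2 + 2 * (w * z * v1)"
    by (simp_all add: algebra_simps)
  then show ?thesis by (simp add: a v adj_def mapply_def mtrace_def pscale_def det)
qed

lemma mapply_pscale: "mapply a (pscale f v) = pscale f (mapply a v)"
  by (cases a) (simp add: mapply_def pscale_def algebra_simps)

lemma funpow_mapply_pscale: "(mapply a ^^ t) (pscale f v) = pscale f ((mapply a ^^ t) v)"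
  by (induction t) (simp_all add: mapply_pscale)

lemma funpow_mapply_adj_mapply:
  assumes "mdet a = 1"
  shows "(mapply (adj a) ^^ t) ((mapply a ^^ t) v) = v"
  by (induction t arbitrary: v) (simp_all add: funpow_swap1 mapply_adj_mapply[OF assms])

lemma funpow_mapply_mapply_adj:
  assumes "mdet a = 1"
  shows "(mapply a ^^ t) ((mapply (adj a) ^^ t) v) = v"
  by (induction t arbitrary: v) (simp_all add: funpow_swap1 mapply_mapply_adj[OF assms])

definition pvec_palindrome :: "pvec \<Rightarrow> bool" where
  "pvec_palindrome v \<longleftrightarrow> palindrome (fst v) \<and> palindrome (snd v)"

lemma pvec_palindrome_mapply_adj:
  assumes "centered a" "pvec_palindrome v"
  shows "pvec_palindrome (mapply (adj a) v)"
  using assms by (cases a) (simp add: centered_def adj_def mapply_def pvec_palindrome_def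
      palindrome_add palindrome_mult)

definition unimodular :: "pvec \<Rightarrow> bool" where
  "unimodular v \<longleftrightarrow> (\<exists>p q. p * fst v + q * snd v = 1)"

lemma unimodular_nonzero: "unimodular v \<Longrightarrow> v \<noteq> 0"
  unfolding unimodular_def by (metis add_0 fst_zero mult_zero_right snd_zero zero_neq_one)

lemma unimodular_mapplyD:
  assumes "unimodular (mapply a v)"
  shows "unimodular v"
proof -
  obtain x y z w where a: "a = (x, y, z, w)" by (cases a)
  have "mapply a v = (x * fst v + y * snd v, z * fst v + w * snd v)"
    by (simp add: mapply_def a)
  then obtain p q where "p * (x * fst v + y * snd v) + q * (z * fst v + w * snd v) = 1"
    using assms unfolding unimodular_def by auto
  then have "(p * x + q * z) * fst v + (p * y + q * w) * snd v = 1"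
    by (simp add: algebra_simps)
  then show ?thesis unfolding unimodular_def by blast
qed

lemma unimodular_mapply_adj:
  assumes "mdet a = 1" "unimodular v"
  shows "unimodular (mapply (adj a) v)"
proof (rule unimodular_mapplyD)
  show "unimodular (mapply a (mapply (adj a) v))"
    using assms by (simp add: mapply_mapply_adj)
qed

text \<open>The stabilizer labels evolve under the inverse matrix \<open>adj a\<close>.\<close>
definition evolved_label :: "pmat \<Rightarrow> pvec \<Rightarrow> nat \<Rightarrow> pvec" where
  "evolved_label a \<xi> t = (mapply (adj a) ^^ t) \<xi>"

lemma evolved_stab_eq_stab_labels:
  assumes "mdet a = 1"
  shows "evolved_stab a \<xi> t = stab_labels (evolved_label a \<xi> t)"
proof (intro set_eqI iffI)
  fix \<eta> assume "\<eta> \<in> evolved_stab a \<xi> t"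
  then obtain f where f: "(mapply a ^^ t) \<eta> = pscale f \<xi>"
    by (auto simp: evolved_stab_def stab_labels_eq_range)
  have "\<eta> = (mapply (adj a) ^^ t) ((mapply a ^^ t) \<eta>)"
    by (simp add: funpow_mapply_adj_mapply[OF assms])
  also have "\<dots> = pscale f (evolved_label a \<xi> t)"
    by (simp add: f funpow_mapply_pscale evolved_label_def)
  finally show "\<eta> \<in> stab_labels (evolved_label a \<xi> t)"
    by (simp add: stab_labels_eq_range)
next
  fix \<eta> assume "\<eta> \<in> stab_labels (evolved_label a \<xi> t)"
  then obtain f where "\<eta> = pscale f (evolved_label a \<xi> t)"
    by (auto simp: stab_labels_eq_range)
  then have "(mapply a ^^ t) \<eta> = pscale f \<xi>"
    by (simp add: funpow_mapply_pscale evolved_label_def funpow_mapply_mapply_adj[OF assms])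
  then show "\<eta> \<in> evolved_stab a \<xi> t"
    by (auto simp: evolved_stab_def stab_labels_eq_range)
qed

lemma evolved_label_Suc_Suc:
  assumes "mdet a = 1"
  shows "evolved_label a \<xi> (Suc (Suc t))
    = pscale (mtrace a) (evolved_label a \<xi> (Suc t)) + evolved_label a \<xi> t"
  by (simp add: evolved_label_def mapply_adj_twice[OF assms])

lemma pvec_palindrome_evolved_label:
  "centered a \<Longrightarrow> pvec_palindrome \<xi> \<Longrightarrow> pvec_palindrome (evolved_label a \<xi> t)"
  by (induction t) (simp_all add: evolved_label_def pvec_palindrome_mapply_adj)

lemma unimodular_evolved_label:
  "mdet a = 1 \<Longrightarrow> unimodular \<xi> \<Longrightarrow> unimodular (evolved_label a \<xi> t)"
  by (induction t) (simp_all add: evolved_label_def unimodular_mapply_adj)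

section \<open>Symplectic linear algebra\<close>

definition additive_subgroup :: "'a::ab_group_add set \<Rightarrow> bool" where
  "additive_subgroup V \<longleftrightarrow> 0 \<in> V \<and> (\<forall>x\<in>V. \<forall>y\<in>V. x - y \<in> V)"

lemma additive_subgroup_add: "additive_subgroup V \<Longrightarrow> x \<in> V \<Longrightarrow> y \<in> V \<Longrightarrow> x + y \<in> V"
  unfolding additive_subgroup_def by (metis diff_0 diff_minus_eq_add)

locale alternating_form =
  fixes \<beta> :: "'a::ab_group_add \<Rightarrow> 'a \<Rightarrow> bit"
  assumes add_left: "\<beta> (x + y) z = \<beta> x z + \<beta> y z"
    and commute: "\<beta> x y = \<beta> y x"
    and self [simp]: "\<beta> x x = 0"
begin

lemma add_right: "\<beta> x (y + z) = \<beta> x y + \<beta> x z"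
  by (metis add_left commute)

lemma zero_left [simp]: "\<beta> 0 y = 0"
  using add_left[of 0 0 y] by simp

lemma zero_right [simp]: "\<beta> x 0 = 0"
  using commute zero_left by metis

lemma diff_left: "\<beta> (x - y) z = \<beta> x z + \<beta> y z"
proof -
  have "\<beta> x z = \<beta> (x - y) z + \<beta> y z"
    using add_left[of "x - y" y z] by simp
  then show ?thesis by (simp add: add.assoc)
qed

lemma sum_left: "\<beta> (sum g P) y = (\<Sum>i\<in>P. \<beta> (g i) y)"
  by (induction P rule: infinite_finite_induct) (simp_all add: add_left)

definition symplectic_pairs :: "'a set \<Rightarrow> nat \<Rightarrow> (nat \<Rightarrow> 'a) \<Rightarrow> (nat \<Rightarrow> 'a) \<Rightarrow> bool" where
  "symplectic_pairs V n e f \<longleftrightarrow>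
     (\<forall>i<n. e i \<in> V \<and> f i \<in> V \<and> \<beta> (e i) (f i) = 1) \<and>
     (\<forall>i<n. \<forall>j<n. i \<noteq> j \<longrightarrow>
        \<beta> (e i) (e j) = 0 \<and> \<beta> (e i) (f j) = 0 \<and> \<beta> (f i) (e j) = 0 \<and> \<beta> (f i) (f j) = 0)"

definition orth :: "'a set \<Rightarrow> 'a set \<Rightarrow> 'a set" where
  "orth V S = {v\<in>V. \<forall>s\<in>S. \<beta> v s = 0}"

definition nondegenerate_on :: "'a set \<Rightarrow> bool" where
  "nondegenerate_on V \<longleftrightarrow> (\<forall>v\<in>V. (\<forall>w\<in>V. \<beta> v w = 0) \<longrightarrow> v = 0)"

lemma additive_subgroup_orth: "additive_subgroup V \<Longrightarrow> additive_subgroup (orth V S)"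
  by (auto simp: additive_subgroup_def orth_def diff_left)

lemma symplectic_pairs_Suc:
  assumes "symplectic_pairs V' m e' f'" "V' \<subseteq> orth V {e, f}"
    and "e \<in> V" "f \<in> V" "\<beta> e f = 1"
  shows "symplectic_pairs V (Suc m) (case_nat e e') (case_nat f f')"
  unfolding symplectic_pairs_def
proof (rule conjI; intro allI impI)
  fix i assume "i < Suc m"
  then show "case_nat e e' i \<in> V \<and> case_nat f f' i \<in> V \<and> \<beta> (case_nat e e' i) (case_nat f f' i) = 1"
    using assms by (cases i) (auto simp: symplectic_pairs_def orth_def)
next
  fix i j assume "i < Suc m" "j < Suc m" "i \<noteq> j"
  then show "\<beta> (case_nat e e' i) (case_nat e e' j) = 0 \<and> \<beta> (case_nat e e' i) (case_nat f f' j) = 0 \<and>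
      \<beta> (case_nat f f' i) (case_nat e e' j) = 0 \<and> \<beta> (case_nat f f' i) (case_nat f f' j) = 0"
    using assms by (cases i; cases j) (auto simp: symplectic_pairs_def orth_def commute)
qed

context
  fixes V e f
  assumes V: "additive_subgroup V" and e: "e \<in> V" and f: "f \<in> V" and ef: "\<beta> e f = 1"
begin

private lemma fe: "\<beta> f e = 1"
  using ef commute by metis

lemma bij_betw_hyperbolic_split:
  "bij_betw (\<lambda>(v, a, b). v + (if a then e else 0) + (if b then f else 0))
     (orth V {e, f} \<times> UNIV \<times> UNIV) V"
    (is "bij_betw ?g _ _")
proof (rule bij_betw_byWitness)
  let ?h = "\<lambda>x. (x - (if \<beta> x f = 1 then e else 0) - (if \<beta> x e = 1 then f else 0),
      \<beta> x f = 1, \<beta> x e = 1)"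
  have ite_in_V: "(if a then e else 0) \<in> V" "(if b then f else 0) \<in> V" for a b
    using V e f by (simp_all add: additive_subgroup_def)
  show "\<forall>y\<in>orth V {e, f} \<times> UNIV \<times> UNIV. ?h (?g y) = y"
  proof
    fix y :: "'a \<times> bool \<times> bool" assume "y \<in> orth V {e, f} \<times> UNIV \<times> UNIV"
    then obtain v a b where y: "y = (v, a, b)" and v: "v \<in> orth V {e, f}"
      by auto
    from v have "\<beta> (?g y) f = of_bool a" "\<beta> (?g y) e = of_bool b"
      unfolding y by (cases a; cases b; simp add: orth_def add_left ef fe)+
    then show "?h (?g y) = y"
      unfolding y by (cases a; cases b) simp_all
  qed
  show "\<forall>x\<in>V. ?g (?h x) = x"
    by simp
  show "?g ` (orth V {e, f} \<times> UNIV \<times> UNIV) \<subseteq> V"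
    using ite_in_V by (auto simp: orth_def intro!: additive_subgroup_add[OF V])
  show "?h ` V \<subseteq> orth V {e, f} \<times> UNIV \<times> UNIV"
  proof (rule image_subsetI)
    fix x assume "x \<in> V"
    then have "fst (?h x) \<in> V"
      using V ite_in_V by (simp add: additive_subgroup_def)
    moreover have "\<beta> (fst (?h x)) e = 0" "\<beta> (fst (?h x)) f = 0"
      by (cases "\<beta> x e"; cases "\<beta> x f"; simp add: diff_left ef fe)+
    ultimately have "fst (?h x) \<in> orth V {e, f}"
      by (simp add: orth_def)
    then show "?h x \<in> orth V {e, f} \<times> UNIV \<times> UNIV"
      by (simp add: mem_Times_iff)
  qed
qed

lemma card_hyperbolic_split: "finite V \<Longrightarrow> card V = 4 * card (orth V {e, f})"
  using bij_betw_same_card[OF bij_betw_hyperbolic_split] by (simp add: card_cartesian_product)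

lemma nondegenerate_on_orth:
  assumes "nondegenerate_on V"
  shows "nondegenerate_on (orth V {e, f})"
  unfolding nondegenerate_on_def
proof (intro ballI impI)
  fix v assume v: "v \<in> orth V {e, f}" and radical: "\<forall>w\<in>orth V {e, f}. \<beta> v w = 0"
  have "\<beta> v x = 0" if "x \<in> V" for x
  proof -
    have "x \<in> (\<lambda>(v, a, b). v + (if a then e else 0) + (if b then f else 0))
        ` (orth V {e, f} \<times> UNIV \<times> UNIV)"
      using bij_betw_imp_surj_on[OF bij_betw_hyperbolic_split] \<open>x \<in> V\<close> by simp
    then obtain w a b where "w \<in> orth V {e, f}" "x = w + (if a then e else 0) + (if b then f else 0)"
      by fastforce
    with v radical show ?thesis
      by (simp add: orth_def add_right)
  qed
  with v assms show "v = 0"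
    unfolding nondegenerate_on_def orth_def by blast
qed

end

lemma symplectic_basis_exists:
  assumes "finite V" "additive_subgroup V" "nondegenerate_on V"
  obtains n e f where "card V = 4 ^ n" "symplectic_pairs V n e f"
  using assms
proof (induction "card V" arbitrary: V thesis rule: less_induct)
  case less
  show ?case
  proof (cases "V = {0}")
    case True
    then show ?thesis by (intro less.prems(1)[of 0]) (simp_all add: symplectic_pairs_def)
  next
    case False
    with \<open>additive_subgroup V\<close> obtain e where e: "e \<in> V" "e \<noteq> 0"
      unfolding additive_subgroup_def by blast
    with \<open>nondegenerate_on V\<close> have "\<exists>f\<in>V. \<beta> e f \<noteq> 0"
      unfolding nondegenerate_on_def by blast
    then obtain f where f: "f \<in> V" "\<beta> e f = 1"
      by auto
    let ?V' = "orth V {e, f}"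
    have card: "card V = 4 * card ?V'"
      by (rule card_hyperbolic_split) (use less.prems e f in auto)
    moreover have "card V > 0"
      using less.prems e by (auto simp: card_gt_0_iff)
    ultimately have "card ?V' < card V" by simp
    moreover have "finite ?V'"
      using \<open>finite V\<close> by (simp add: orth_def)
    moreover have "additive_subgroup ?V'" "nondegenerate_on ?V'"
      using less.prems e f by (simp_all add: additive_subgroup_orth nondegenerate_on_orth)
    ultimately obtain m e' f' where "card ?V' = 4 ^ m" and pairs: "symplectic_pairs ?V' m e' f'"
      using less.hyps by metis
    moreover have "symplectic_pairs V (Suc m) (case_nat e e') (case_nat f f')"
      by (rule symplectic_pairs_Suc) (use e f pairs in auto)
    ultimately show ?thesis
      using card by (intro less.prems(1)) simp_all
  qed
qed

lemma pairing_combination: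
  assumes pairs: "symplectic_pairs V n e f" and PQ: "P \<subseteq> {..<n}" "Q \<subseteq> {..<n}" and i: "i < n"
  shows "\<beta> (sum e P + sum f Q) (f i) = of_bool (i \<in> P)"
    and "\<beta> (sum e P + sum f Q) (e i) = of_bool (i \<in> Q)"
proof -
  have dual: "\<beta> (e j) (f i) = of_bool (j = i)" "\<beta> (f j) (e i) = of_bool (j = i)"
    "\<beta> (e j) (e i) = 0" "\<beta> (f j) (f i) = 0" if "j < n" for j
    using pairs that i commute[of "f i" "e i"] by (cases "j = i"; auto simp: symplectic_pairs_def)+
  have delta: "(\<Sum>j\<in>S. of_bool (j = i)) = (of_bool (i \<in> S) :: bit)" if "S \<subseteq> {..<n}" for S
    using finite_subset[OF that] by (simp add: of_bool_def sum.delta)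
  have "(\<Sum>j\<in>P. \<beta> (e j) (f i)) = (\<Sum>j\<in>P. of_bool (j = i))"
    "(\<Sum>j\<in>Q. \<beta> (f j) (e i)) = (\<Sum>j\<in>Q. of_bool (j = i))"
    "(\<Sum>j\<in>Q. \<beta> (f j) (f i)) = 0" "(\<Sum>j\<in>P. \<beta> (e j) (e i)) = 0"
    using PQ dual by (auto intro!: sum.cong sum.neutral)
  with PQ show "\<beta> (sum e P + sum f Q) (f i) = of_bool (i \<in> P)"
      and "\<beta> (sum e P + sum f Q) (e i) = of_bool (i \<in> Q)"
    by (simp_all add: add_left sum_left delta)
qed

lemma symplectic_pairs_independent:
  assumes pairs: "symplectic_pairs V n e f"
    and orth: "\<And>i. i < n \<Longrightarrow> \<beta> d (e i) = 0 \<and> \<beta> d (f i) = 0"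
    and PQ: "P \<subseteq> {..<n}" "Q \<subseteq> {..<n}" "P' \<subseteq> {..<n}" "Q' \<subseteq> {..<n}"
    and d: "d = (sum e P + sum f Q) - (sum e P' + sum f Q')"
  shows "P = P' \<and> Q = Q'"
proof -
  have of_bool_sum_eq_0: "(of_bool A + of_bool B :: bit) = 0 \<longleftrightarrow> (A \<longleftrightarrow> B)" for A B
    by (cases A; cases B) simp_all
  have "i \<in> P \<longleftrightarrow> i \<in> P'" "i \<in> Q \<longleftrightarrow> i \<in> Q'" if "i < n" for i
    using orth[OF that] pairing_combination[OF pairs _ _ that] PQ
    by (simp_all add: d diff_left of_bool_sum_eq_0)
  with PQ show ?thesis by blast
qed

end

section \<open>Entanglement of a stabilizer module\<close>

definition halfwidth :: "pvec \<Rightarrow> int" where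
  "halfwidth z = Max (psupp z)"

lemma uminus_in_psupp: "pvec_palindrome z \<Longrightarrow> x \<in> psupp z \<Longrightarrow> - x \<in> psupp z"
  by (auto simp: pvec_palindrome_def psupp_def palindrome_uminus_in_keys)

lemma abs_le_halfwidth:
  assumes "pvec_palindrome z" "x \<in> psupp z"
  shows "\<bar>x\<bar> \<le> halfwidth z"
  using assms uminus_in_psupp[OF assms] by (simp add: halfwidth_def abs_le_iff)

lemma halfwidth_nonneg: "pvec_palindrome z \<Longrightarrow> z \<noteq> 0 \<Longrightarrow> 0 \<le> halfwidth z"
  using abs_le_halfwidth[of z "halfwidth z"]
  by (simp add: halfwidth_def psupp_eq_empty_iff)

lemma in_psupp_pscale_obtain_key:
  assumes "pvec_palindrome z" "x \<in> psupp (pscale h z)"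
  obtains k where "k \<in> keys h" "\<bar>x - k\<bar> \<le> halfwidth z"
  using assms(2) by (rule in_psupp_pscale_obtain) (use abs_le_halfwidth[OF assms(1)] in force)

lemma extreme_keys_in_psupp_pscale:
  assumes z: "pvec_palindrome z" "z \<noteq> 0" and h: "h \<noteq> 0"
  shows "Max (keys h) + halfwidth z \<in> psupp (pscale h z)"
    and "Min (keys h) - halfwidth z \<in> psupp (pscale h z)"
proof -
  let ?D = "halfwidth z"
  txt \<open>A component of \<open>z\<close> reaching \<open>?D\<close> reaches \<open>-?D\<close> as well; its extreme exponents are \<open>\<plusminus>?D\<close>.\<close>
  have extreme: "Max (keys h) + ?D \<in> keys (h * p) \<and> Min (keys h) - ?D \<in> keys (h * p)"
    if p: "palindrome p" "?D \<in> keys p" "keys p \<subseteq> psupp z" for p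
  proof -
    have "p \<noteq> 0" using p(2) by auto
    moreover have "Max (keys p) = ?D" "Min (keys p) = - ?D"
      using p palindrome_uminus_in_keys[OF p(1,2)] abs_le_halfwidth[OF z(1)]
      by (force intro!: Max_eqI Min_eqI simp: abs_le_iff)+
    ultimately show ?thesis
      using Max_keys_mult[OF h, of p] Min_keys_mult[OF h, of p] by simp
  qed
  have "?D \<in> psupp z"
    using z(2) by (simp add: halfwidth_def psupp_eq_empty_iff)
  then have "?D \<in> keys (fst z) \<or> ?D \<in> keys (snd z)"
    by (simp add: psupp_def)
  then show "Max (keys h) + ?D \<in> psupp (pscale h z)" "Min (keys h) - ?D \<in> psupp (pscale h z)"
    using extreme[of "fst z"] extreme[of "snd z"] z(1)
    by (auto simp: pvec_palindrome_def psupp_def pscale_def)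
qed

lemma psupp_pscale_subset_left:
  assumes "pvec_palindrome z" "keys h \<subseteq> {..<c - halfwidth z}"
  shows "psupp (pscale h z) \<subseteq> {..<c}"
proof
  fix x assume x: "x \<in> psupp (pscale h z)"
  obtain k where "k \<in> keys h" "\<bar>x - k\<bar> \<le> halfwidth z"
    using in_psupp_pscale_obtain_key[OF assms(1) x] by blast
  with assms(2) show "x \<in> {..<c}" by auto
qed

lemma psupp_pscale_disjoint_left:
  assumes "pvec_palindrome z" "keys h \<subseteq> {c + halfwidth z..}"
  shows "{..<c} \<inter> psupp (pscale h z) = {}"
proof (intro equalityI subsetI)
  fix x assume "x \<in> {..<c} \<inter> psupp (pscale h z)"
  then obtain k where "x < c" "k \<in> keys h" "\<bar>x - k\<bar> \<le> halfwidth z"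
    using assms(1) by (auto elim: in_psupp_pscale_obtain_key)
  with assms(2) show "x \<in> {}" by auto
qed simp

lemma keys_subset_left_if_psupp_pscale_subset:
  assumes z: "pvec_palindrome z" "z \<noteq> 0" and left: "psupp (pscale h z) \<subseteq> {..<c}"
  shows "keys h \<subseteq> {..<c - halfwidth z}"
proof (cases "h = 0")
  case False
  then have "Max (keys h) + halfwidth z \<in> {..<c}"
    using extreme_keys_in_psupp_pscale(1)[OF z False] left by blast
  then have max: "Max (keys h) < c - halfwidth z"
    by simp
  show ?thesis
  proof
    fix k assume "k \<in> keys h"
    then have "k \<le> Max (keys h)" by simp
    with max show "k \<in> {..<c - halfwidth z}" by simp
  qed
qed simp

lemma keys_subset_right_if_psupp_pscale_disjoint:
  assumes z: "pvec_palindrome z" "z \<noteq> 0" and right: "{..<c} \<inter> psupp (pscale h z) = {}"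
  shows "keys h \<subseteq> {c + halfwidth z..}"
proof (cases "h = 0")
  case False
  then have "\<not> Min (keys h) - halfwidth z < c"
    using extreme_keys_in_psupp_pscale(2)[OF z False] right by blast
  then have min: "c + halfwidth z \<le> Min (keys h)"
    by simp
  show ?thesis
  proof
    fix k assume "k \<in> keys h"
    then have "Min (keys h) \<le> k" by simp
    with min show "k \<in> {c + halfwidth z..}" by simp
  qed
qed simp

text \<open>The stabilizer labels of a palindromic unimodular vector form a Lagrangian subspace:
  they are exactly the labels commuting with all of them.\<close>
lemma in_stab_labels_if_symp_on_orthogonal:
  assumes z: "pvec_palindrome z" "unimodular z"
    and orth: "\<And>k. symp_on UNIV v (pscale (upow k) z) = 0"
  shows "v \<in> stab_labels z"
proof -
  obtain p q where pq: "p * fst z + q * snd z = 1"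
    using z(2) unfolding unimodular_def by blast
  have "fst v * snd z + snd v * fst z = 0"
  proof (rule poly_mapping_eqI)
    fix k
    show "coeff (fst v * snd z + snd v * fst z) k = coeff 0 k"
      using orth[of k] z(1) by (simp add: symp_on_UNIV_pscale_upow pvec_palindrome_def)
  qed
  then have cross: "fst v * snd z = snd v * fst z"
    by (simp only: lpoly_add_eq_0_iff)
  define h where "h = p * fst v + q * snd v"
  have "fst v = h * fst z"
  proof -
    have "fst v = fst v * (p * fst z + q * snd z)" by (simp add: pq)
    also have "\<dots> = h * fst z" by (simp add: h_def algebra_simps cross)
    finally show ?thesis .
  qed
  moreover have "snd v = h * snd z"
  proof -
    have "snd v = snd v * (p * fst z + q * snd z)" by (simp add: pq)
    also have "\<dots> = h * snd z" by (simp add: h_def algebra_simps cross)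
    finally show ?thesis .
  qed
  ultimately show ?thesis
    by (auto simp: stab_labels_def prod_eq_iff)
qed

text \<open>The commutation form across the cut at \<open>c\<close>, transported to coefficient polynomials
  \<open>f \<mapsto> f z\<close> of the stabilizer labels.\<close>
definition cut_form :: "int \<Rightarrow> pvec \<Rightarrow> lpoly \<Rightarrow> lpoly \<Rightarrow> bit" where
  "cut_form c z f g = symp_on {..<c} (pscale f z) (pscale g z)"

interpretation cut: alternating_form "cut_form c z" for c z
proof
  show "cut_form c z (f + g) h = cut_form c z f h + cut_form c z g h" for f g h
    by (simp add: cut_form_def pscale_add symp_on_add_left)
  show "cut_form c z f g = cut_form c z g f" for f g
    unfolding cut_form_def by (rule symp_on_commute)
qed (simp add: cut_form_def)

lemma cut_form_left_eq_0:
  assumes "pvec_palindrome z" "keys h \<subseteq> {..<c - halfwidth z}"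
  shows "cut_form c z h g = 0"
proof -
  have "psupp (pscale h z) \<subseteq> {..<c}"
    using assms by (rule psupp_pscale_subset_left)
  then have "cut_form c z h g = symp_on UNIV (pscale h z) (pscale g z)"
    unfolding cut_form_def by (rule symp_on_eq_UNIV)
  also have "\<dots> = 0"
    using assms(1) by (simp add: pvec_palindrome_def symp_on_UNIV_pscale_palindrome)
  finally show ?thesis .
qed

lemma cut_form_right_eq_0:
  assumes "pvec_palindrome z" "keys h \<subseteq> {c + halfwidth z..}"
  shows "cut_form c z h g = 0"
  unfolding cut_form_def by (rule symp_on_disjoint) (rule psupp_pscale_disjoint_left[OF assms])

definition cut_window :: "int \<Rightarrow> pvec \<Rightarrow> int set" where
  "cut_window c z = {c - halfwidth z..<c + halfwidth z}"

lemma cut_form_upow_eq_0: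
  assumes z: "pvec_palindrome z"
    and radical: "\<And>g. keys g \<subseteq> cut_window c z \<Longrightarrow> cut_form c z f g = 0"
  shows "cut_form c z f (upow k) = 0"
proof -
  consider "k < c - halfwidth z" | "k \<in> cut_window c z" | "c + halfwidth z \<le> k"
    by (force simp: cut_window_def)
  then show ?thesis
  proof cases
    case 1
    then show ?thesis
      using cut_form_left_eq_0[OF z, of "upow k"] cut.commute by auto
  next
    case 2
    then show ?thesis by (simp add: radical)
  next
    case 3
    then show ?thesis
      using cut_form_right_eq_0[OF z, of "upow k"] cut.commute by auto
  qed
qed

text \<open>The left restriction of the label of \<open>f\<close> commutes with the whole stabilizer, so it is a
  stabilizer label \<open>h z\<close> with \<open>h\<close> left of the window, while \<open>(f + h) z\<close> lives right of the cut,
  so \<open>f + h\<close> is right of the window; hence \<open>f = (f + h) + h\<close> has no exponent in the window.\<close>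
lemma cut_form_nondegenerate_on_window:
  assumes z: "pvec_palindrome z" "unimodular z"
  shows "cut.nondegenerate_on c z {f. keys f \<subseteq> cut_window c z}"
  unfolding cut.nondegenerate_on_def
proof (intro ballI impI)
  fix f assume f: "f \<in> {f. keys f \<subseteq> cut_window c z}"
    and radical: "\<forall>g\<in>{f. keys f \<subseteq> cut_window c z}. cut_form c z f g = 0"
  have z0: "z \<noteq> 0" using z(2) by (rule unimodular_nonzero)
  define v where "v = prestrict {..<c} (pscale f z)"
  have "v \<in> stab_labels z"
  proof (rule in_stab_labels_if_symp_on_orthogonal[OF z])
    show "symp_on UNIV v (pscale (upow k) z) = 0" for k
      using cut_form_upow_eq_0[OF z(1)] radical
      by (simp add: v_def cut_form_def symp_on_prestrict[symmetric])
  qed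
  then obtain h where v: "v = pscale h z"
    by (auto simp: stab_labels_eq_range)
  have "psupp (pscale h z) \<subseteq> {..<c}"
    by (simp add: v[symmetric] v_def psupp_prestrict)
  then have h: "keys h \<subseteq> {..<c - halfwidth z}"
    by (rule keys_subset_left_if_psupp_pscale_subset[OF z(1) z0])
  have "{..<c} \<inter> psupp (pscale (f + h) z) = {}"
    using psupp_add_prestrict_disjoint[of "{..<c}" "pscale f z"]
    by (simp add: pscale_add v[symmetric] v_def)
  then have fh: "keys (f + h) \<subseteq> {c + halfwidth z..}"
    by (rule keys_subset_right_if_psupp_pscale_disjoint[OF z(1) z0])
  have "keys f \<subseteq> keys (f + h) \<union> keys h"
    using keys_add[of "f + h" h] by (simp add: add.assoc)
  have "keys f = {}"
  proof (rule equals0I)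
    fix k assume "k \<in> keys f"
    with f \<open>keys f \<subseteq> keys (f + h) \<union> keys h\<close>
    have "k \<in> cut_window c z" "k \<in> keys (f + h) \<or> k \<in> keys h"
      by blast+
    with h fh show False
      by (auto simp: cut_window_def)
  qed
  then show "f = 0" by simp
qed

lemma stab_labels_choice:
  assumes "\<forall>i<n. \<eta> i \<in> stab_labels z"
  obtains E where "\<And>i. i < n \<Longrightarrow> \<eta> i = pscale (E i) z"
proof -
  have "\<forall>i\<in>{..<n}. \<exists>g. \<eta> i = pscale g z"
    using assms by (simp add: stab_labels_eq_range image_iff)
  from bchoice[OF this] obtain E where "\<forall>i\<in>{..<n}. \<eta> i = pscale (E i) z"
    by blast
  then show ?thesis using that by simp
qed

text \<open>A polynomial without exponents in the window splits into a part whose labels live left of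
  the cut and a part whose labels live right of it; neither is seen by a label that commutes
  with all stabilizers supported on the left.\<close>
lemma symp_on_pscale_outside_window:
  assumes z: "pvec_palindrome z" "z \<noteq> 0"
    and local: "\<And>g. g \<in> stab_labels z \<Longrightarrow> psupp g \<subseteq> {..<c} \<Longrightarrow> symp_on {..<c} w g = 0"
    and d: "keys d \<inter> cut_window c z = {}"
  shows "symp_on {..<c} (pscale d z) w = 0"
proof -
  let ?lo = "lrestrict {..<c - halfwidth z} d" and ?hi = "lrestrict {c + halfwidth z..} d"
  have split: "d = ?lo + ?hi"
    by (rule lrestrict_split) (use d halfwidth_nonneg[OF z] in \<open>auto simp: cut_window_def\<close>)
  have "psupp (pscale ?lo z) \<subseteq> {..<c}"
    using z(1) by (rule psupp_pscale_subset_left) (simp add: keys_lrestrict)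
  then have "symp_on {..<c} (pscale ?lo z) w = 0"
    using local[of "pscale ?lo z"] by (simp add: stab_labels_eq_range symp_on_commute)
  moreover have "symp_on {..<c} (pscale ?hi z) w = 0"
    by (rule symp_on_disjoint, rule psupp_pscale_disjoint_left[OF z(1)]) (simp add: keys_lrestrict)
  ultimately show ?thesis
    by (subst split) (simp add: pscale_add symp_on_add_left)
qed

lemma symplectic_pairs_le_halfwidth:
  assumes pairs: "cut.symplectic_pairs c z V n E F"
    and orth: "\<And>d i. keys d \<inter> cut_window c z = {} \<Longrightarrow> i < n \<Longrightarrow>
      cut_form c z d (E i) = 0 \<and> cut_form c z d (F i) = 0"
  shows "n \<le> nat (halfwidth z)"
proof -
  let ?W = "cut_window c z"
  define comb where "comb PQ = sum E (fst PQ) + sum F (snd PQ)" for PQ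
  have inj: "inj_on (\<lambda>PQ. lrestrict ?W (comb PQ)) (Pow {..<n} \<times> Pow {..<n})"
  proof (rule inj_onI, clarsimp)
    fix P Q P' Q' assume PQ: "P \<subseteq> {..<n}" "Q \<subseteq> {..<n}" "P' \<subseteq> {..<n}" "Q' \<subseteq> {..<n}"
      and "lrestrict ?W (comb (P, Q)) = lrestrict ?W (comb (P', Q'))"
    then have "keys (comb (P, Q) - comb (P', Q')) \<inter> ?W = {}"
      using keys_diff_disjoint_if_lrestrict_eq by blast
    then show "P = P' \<and> Q = Q'"
      using cut.symplectic_pairs_independent[OF pairs orth PQ] by (simp add: comb_def)
  qed
  have image: "(\<lambda>PQ. lrestrict ?W (comb PQ)) ` (Pow {..<n} \<times> Pow {..<n}) \<subseteq> {p. keys p \<subseteq> ?W}"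
    by (auto simp: keys_lrestrict)
  have "finite {p. keys p \<subseteq> ?W}"
    by (simp add: finite_lpoly_keys_subset cut_window_def)
  with inj image have "card (Pow {..<n} \<times> Pow {..<n}) \<le> card {p. keys p \<subseteq> ?W}"
    by (rule card_inj_on_le)
  then have "(2::nat) ^ (n + n) \<le> 2 ^ nat (2 * halfwidth z)"
    by (simp add: card_cartesian_product card_Pow card_lpoly_keys_subset cut_window_def power_add)
  then show ?thesis
    by simp
qed

lemma ent_pairs_le_halfwidth:
  assumes z: "pvec_palindrome z" "z \<noteq> 0" and "ent_pairs c (stab_labels z) n"
  shows "n \<le> nat (halfwidth z)"
proof -
  obtain \<eta> \<zeta> where labels: "\<forall>i<n. \<eta> i \<in> stab_labels z \<and> \<zeta> i \<in> stab_labels z"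
    and one: "\<forall>i<n. symp_on {..<c} (\<eta> i) (\<zeta> i) = 1"
    and cross: "\<forall>i<n. \<forall>j<n. i \<noteq> j \<longrightarrow>
        symp_on {..<c} (\<eta> i) (\<eta> j) = 0 \<and> symp_on {..<c} (\<eta> i) (\<zeta> j) = 0 \<and>
        symp_on {..<c} (\<zeta> i) (\<eta> j) = 0 \<and> symp_on {..<c} (\<zeta> i) (\<zeta> j) = 0"
    and local: "\<forall>i<n. \<forall>g\<in>stab_labels z. psupp g \<subseteq> {..<c} \<longrightarrow>
        symp_on {..<c} (\<eta> i) g = 0 \<and> symp_on {..<c} (\<zeta> i) g = 0"
    using assms(3) unfolding ent_pairs_def by (elim exE conjE) (rule that; assumption)
  obtain E where E: "\<And>i. i < n \<Longrightarrow> \<eta> i = pscale (E i) z"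
    by (rule stab_labels_choice[of n \<eta> z]) (use labels in auto)
  obtain F where F: "\<And>i. i < n \<Longrightarrow> \<zeta> i = pscale (F i) z"
    by (rule stab_labels_choice[of n \<zeta> z]) (use labels in auto)
  show ?thesis
  proof (rule symplectic_pairs_le_halfwidth)
    show "cut.symplectic_pairs c z UNIV n E F"
      using one cross by (simp add: cut.symplectic_pairs_def cut_form_def E F)
    show "cut_form c z d (E i) = 0 \<and> cut_form c z d (F i) = 0"
      if "keys d \<inter> cut_window c z = {}" "i < n" for d i
      using symp_on_pscale_outside_window[OF z _ that(1)] local that(2)
      by (simp add: cut_form_def E F)
  qed
qed

lemma symp_on_stab_labels_left_eq_0:
  assumes "pvec_palindrome z" "v \<in> stab_labels z" "g \<in> stab_labels z" "psupp g \<subseteq> {..<c}"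
  shows "symp_on {..<c} v g = 0"
proof -
  have "symp_on {..<c} v g = symp_on UNIV g v"
    using symp_on_eq_UNIV[OF assms(4)] symp_on_commute by metis
  also have "\<dots> = 0"
    using assms(1-3) by (auto simp: stab_labels_eq_range pvec_palindrome_def
        symp_on_UNIV_pscale_palindrome)
  finally show ?thesis .
qed

lemma straddles_cut_if_cut_form_eq_1:
  assumes "pvec_palindrome z" "cut_form c z f g = 1"
  shows "psupp (pscale f z) \<inter> {..<c} \<noteq> {}" and "psupp (pscale f z) \<inter> {c..} \<noteq> {}"
proof -
  show "psupp (pscale f z) \<inter> {..<c} \<noteq> {}"
    using symp_on_disjoint[of "{..<c}" "pscale f z" "pscale g z"] assms(2)
    by (auto simp: cut_form_def Int_commute)
  show "psupp (pscale f z) \<inter> {c..} \<noteq> {}"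
  proof
    assume "psupp (pscale f z) \<inter> {c..} = {}"
    then have "psupp (pscale f z) \<subseteq> {..<c}" by auto
    then have "cut_form c z f g = symp_on UNIV (pscale f z) (pscale g z)"
      unfolding cut_form_def by (rule symp_on_eq_UNIV)
    with assms show False
      by (simp add: pvec_palindrome_def symp_on_UNIV_pscale_palindrome)
  qed
qed

lemma window_symplectic_basis:
  assumes z: "pvec_palindrome z" "unimodular z"
  obtains E F where
    "cut.symplectic_pairs c z {f. keys f \<subseteq> cut_window c z} (nat (halfwidth z)) E F"
proof -
  let ?V = "{f. keys f \<subseteq> cut_window c z}"
  have "finite ?V"
    by (simp add: finite_lpoly_keys_subset cut_window_def)
  moreover have "additive_subgroup ?V"
    unfolding additive_subgroup_def lpoly_diff_eq_add
  proof (intro conjI ballI)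
    fix x y assume "x \<in> ?V" "y \<in> ?V"
    then show "x + y \<in> ?V"
      using keys_add[of x y] by auto
  qed simp
  ultimately obtain n E F where card: "card ?V = 4 ^ n" and pairs: "cut.symplectic_pairs c z ?V n E F"
    using cut_form_nondegenerate_on_window[OF z] by (rule cut.symplectic_basis_exists)
  have "(2::nat) ^ (2 * n) = 2 ^ nat (2 * halfwidth z)"
    using card by (simp add: card_lpoly_keys_subset cut_window_def power_mult)
  then have "n = nat (halfwidth z)"
    by simp
  with pairs show ?thesis
    by (intro that) simp
qed

lemma ent_pairs_halfwidth:
  assumes z: "pvec_palindrome z" "unimodular z"
  shows "ent_pairs c (stab_labels z) (nat (halfwidth z))"
proof -
  let ?n = "nat (halfwidth z)"
  obtain E F where pairs: "cut.symplectic_pairs c z {f. keys f \<subseteq> cut_window c z} ?n E F"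
    using window_symplectic_basis[OF z] by blast
  have one: "\<forall>i<?n. cut_form c z (E i) (F i) = 1 \<and> cut_form c z (F i) (E i) = 1"
    using pairs cut.commute by (simp add: cut.symplectic_pairs_def)
  have labels: "\<forall>i<?n. pscale (E i) z \<in> stab_labels z \<and> pscale (F i) z \<in> stab_labels z"
    by (simp add: stab_labels_eq_range)
  have straddle: "\<forall>i<?n. psupp (pscale (E i) z) \<inter> {..<c} \<noteq> {} \<and> psupp (pscale (E i) z) \<inter> {c..} \<noteq> {} \<and>
      psupp (pscale (F i) z) \<inter> {..<c} \<noteq> {} \<and> psupp (pscale (F i) z) \<inter> {c..} \<noteq> {}"
    using one straddles_cut_if_cut_form_eq_1[OF z(1)] by blast
  have pairing: "\<forall>i<?n. symp_on {..<c} (pscale (E i) z) (pscale (F i) z) = 1"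
    using one by (simp add: cut_form_def)
  have cross: "\<forall>i<?n. \<forall>j<?n. i \<noteq> j \<longrightarrow>
      symp_on {..<c} (pscale (E i) z) (pscale (E j) z) = 0 \<and> symp_on {..<c} (pscale (E i) z) (pscale (F j) z) = 0 \<and>
      symp_on {..<c} (pscale (F i) z) (pscale (E j) z) = 0 \<and> symp_on {..<c} (pscale (F i) z) (pscale (F j) z) = 0"
    using pairs by (simp add: cut.symplectic_pairs_def cut_form_def)
  have local: "\<forall>i<?n. \<forall>g\<in>stab_labels z. psupp g \<subseteq> {..<c} \<longrightarrow>
      symp_on {..<c} (pscale (E i) z) g = 0 \<and> symp_on {..<c} (pscale (F i) z) g = 0"
    using labels symp_on_stab_labels_left_eq_0[OF z(1)] by blast
  show ?thesis
    unfolding ent_pairs_def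
    by (rule exI[of _ "\<lambda>i. pscale (E i) z"], rule exI[of _ "\<lambda>i. pscale (F i) z"])
      (intro conjI labels straddle pairing cross local)
qed

lemma entanglement_stab_labels:
  assumes "pvec_palindrome z" "unimodular z"
  shows "entanglement c (stab_labels z) = enat (nat (halfwidth z))"
  unfolding entanglement_def
proof (rule antisym)
  show "Sup (enat ` {n. ent_pairs c (stab_labels z) n}) \<le> enat (nat (halfwidth z))"
    using ent_pairs_le_halfwidth[OF assms(1) unimodular_nonzero[OF assms(2)]]
    by (auto intro!: Sup_least)
  show "enat (nat (halfwidth z)) \<le> Sup (enat ` {n. ent_pairs c (stab_labels z) n})"
    using ent_pairs_halfwidth[OF assms] by (auto intro!: Sup_upper)
qed

section \<open>Growth of the half-width\<close>

lemma ldeg_ge: "k \<in> keys p \<Longrightarrow> k \<le> ldeg p"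
  unfolding ldeg_def by (rule Max_ge) simp_all

lemma ldeg_nonneg: "0 \<le> ldeg p"
  unfolding ldeg_def by (rule Max_ge) simp_all

lemma ldeg_pos_imp_Max_keys:
  assumes "0 < ldeg p"
  shows "p \<noteq> 0" and "Max (keys p) = ldeg p"
proof -
  show "p \<noteq> 0"
    using assms by (auto simp: ldeg_def)
  then show "Max (keys p) = ldeg p"
    using assms by (simp add: ldeg_def Max_insert)
qed

lemma halfwidth_recurrence:
  assumes z: "pvec_palindrome z0" "pvec_palindrome z1" "z1 \<noteq> 0" "z2 \<noteq> 0"
    and z2: "z2 = pscale \<tau> z1 + z0"
  shows "halfwidth z2 \<le> max (ldeg \<tau> + halfwidth z1) (halfwidth z0)"
    and "0 < ldeg \<tau> \<Longrightarrow> halfwidth z0 < ldeg \<tau> + halfwidth z1 \<Longrightarrow>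
      halfwidth z2 = ldeg \<tau> + halfwidth z1"
proof -
  have "x \<le> max (ldeg \<tau> + halfwidth z1) (halfwidth z0)" if "x \<in> psupp z2" for x
  proof -
    from that have "x \<in> psupp (pscale \<tau> z1) \<or> x \<in> psupp z0"
      using psupp_add_subset z2 by blast
    then show ?thesis
    proof
      assume "x \<in> psupp (pscale \<tau> z1)"
      then obtain k where "k \<in> keys \<tau>" "\<bar>x - k\<bar> \<le> halfwidth z1"
        using in_psupp_pscale_obtain_key[OF z(2)] by blast
      then show ?thesis
        using ldeg_ge[of k \<tau>] by linarith
    next
      assume "x \<in> psupp z0"
      then have "x \<le> halfwidth z0"
        by (simp add: halfwidth_def)
      then show ?thesis by simp
    qed
  qed
  then show upper: "halfwidth z2 \<le> max (ldeg \<tau> + halfwidth z1) (halfwidth z0)"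
    using z(4) by (simp add: halfwidth_def psupp_eq_empty_iff)
  assume d: "0 < ldeg \<tau>" and grows: "halfwidth z0 < ldeg \<tau> + halfwidth z1"
  have "ldeg \<tau> + halfwidth z1 \<in> psupp (pscale \<tau> z1)"
    using extreme_keys_in_psupp_pscale(1)[OF z(2,3) ldeg_pos_imp_Max_keys(1)[OF d]]
    by (simp add: ldeg_pos_imp_Max_keys(2)[OF d])
  moreover have "ldeg \<tau> + halfwidth z1 \<notin> psupp z0"
  proof
    assume "ldeg \<tau> + halfwidth z1 \<in> psupp z0"
    then have "ldeg \<tau> + halfwidth z1 \<le> halfwidth z0"
      by (simp add: halfwidth_def)
    with grows show False by simp
  qed
  ultimately have "ldeg \<tau> + halfwidth z1 \<in> psupp z2"
    unfolding z2 by (rule in_psupp_add_left)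
  then have "ldeg \<tau> + halfwidth z1 \<le> halfwidth z2"
    by (simp add: halfwidth_def)
  with upper grows show "halfwidth z2 = ldeg \<tau> + halfwidth z1"
    by linarith
qed

lemma eventually_linear_growth:
  fixes D :: "nat \<Rightarrow> int" and d :: int
  assumes "0 \<le> d" and nonneg: "\<And>t. 0 \<le> D t"
    and upper: "\<And>t. D (Suc (Suc t)) \<le> max (d + D (Suc t)) (D t)"
    and exact: "\<And>t. 0 < d \<Longrightarrow> D t < d + D (Suc t) \<Longrightarrow> D (Suc (Suc t)) = d + D (Suc t)"
  obtains M where "\<forall>\<^sub>F t in sequentially. \<bar>D t - d * int t\<bar> \<le> M"
proof (cases "d = 0")
  case True
  have "D t \<le> max (D 0) (D 1) \<and> D (Suc t) \<le> max (D 0) (D 1)" for t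
  proof (induction t)
    case (Suc t)
    have "D (Suc (Suc t)) \<le> max (D (Suc t)) (D t)"
      using upper[of t] True by simp
    also have "\<dots> \<le> max (D 0) (D 1)"
      using Suc by simp
    finally show ?case
      using Suc by simp
  qed simp
  then have "\<forall>t. \<bar>D t - d * int t\<bar> \<le> max (D 0) (D 1)"
    using nonneg True by simp
  then show ?thesis
    by (intro that always_eventually)
next
  case False
  with \<open>0 \<le> d\<close> have d: "0 < d" by simp
  txt \<open>\<open>D\<close> cannot keep dropping by \<open>d\<close>, so at some point the exact growth regime starts.\<close>
  obtain t0 where t0: "D t0 < d + D (Suc t0)"
  proof (rule ccontr)
    assume "\<not> thesis"
    with that have "\<not> D t < d + D (Suc t)" for t
      by blast
    with d have step: "D (Suc t) \<le> D t - 1" for t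
      using not_less[of "D t" "d + D (Suc t)"] by simp
    have "D t \<le> D 0 - int t" for t
    proof (induction t)
      case (Suc t)
      then show ?case
        using step[of t] by simp
    qed simp
    from this[of "nat (D 0) + 1"] nonneg[of "nat (D 0) + 1"] nonneg[of 0] show False
      by simp
  qed
  have "D (t0 + s) < d + D (Suc (t0 + s)) \<and> D (Suc (t0 + s)) = D (Suc t0) + d * int s" for s
  proof (induction s)
    case (Suc s)
    then show ?case
      using exact[OF d, of "t0 + s"] d by (simp add: algebra_simps)
  qed (use t0 in simp)
  then have "D t - d * int t = D (Suc t0) - d * int (Suc t0)" if "Suc t0 \<le> t" for t
    using that by (auto simp: le_iff_add algebra_simps)
  then have "\<forall>\<^sub>F t in sequentially. \<bar>D t - d * int t\<bar> \<le> \<bar>D (Suc t0) - d * int (Suc t0)\<bar>"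
    unfolding eventually_sequentially by (metis order_refl)
  then show ?thesis
    by (rule that)
qed

lemma tendsto_div_of_bounded_deviation:
  fixes D :: "nat \<Rightarrow> int"
  assumes bounded: "\<forall>\<^sub>F t in sequentially. \<bar>D t - d * int t\<bar> \<le> M"
  shows "(\<lambda>t. real_of_int (D t) / real t) \<longlonglongrightarrow> real_of_int d"
proof -
  have "(\<lambda>t. real_of_int (D t - d * int t) / real t) \<longlonglongrightarrow> 0"
  proof (rule Lim_null_comparison[OF _ lim_const_over_n[of "real_of_int M"]])
    show "\<forall>\<^sub>F t in sequentially. norm (real_of_int (D t - d * int t) / real t) \<le> real_of_int M / real t"
      using bounded
    proof eventually_elim
      case (elim t)
      then have "\<bar>real_of_int (D t - d * int t)\<bar> \<le> real_of_int M"
        by (metis of_int_abs of_int_le_iff)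
      then have "\<bar>real_of_int (D t - d * int t)\<bar> / real t \<le> real_of_int M / real t"
        by (rule divide_right_mono) simp
      then show ?case by simp
    qed
  qed
  then have "(\<lambda>t. real_of_int d + real_of_int (D t - d * int t) / real t) \<longlonglongrightarrow> real_of_int d + 0"
    by (intro tendsto_add tendsto_const)
  moreover have "\<forall>\<^sub>F t in sequentially.
      real_of_int d + real_of_int (D t - d * int t) / real t = real_of_int (D t) / real t"
    unfolding eventually_sequentially by (rule exI[of _ 1]) (simp add: field_simps)
  ultimately show ?thesis
    using Lim_transform_eventually by fastforce
qed

theorem mainTheorem15:
  fixes a :: pmat and \<xi> :: pvec and c :: int
  assumes "centered a"
    and "palindrome (fst \<xi>)" and "palindrome (snd \<xi>)"
    and "lcoprime (fst \<xi>) (snd \<xi>)"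
  shows "(\<forall>t. entanglement c (evolved_stab a \<xi> t) \<noteq> \<infinity>) \<and>
    (\<lambda>t. real (the_enat (entanglement c (evolved_stab a \<xi> t))) / real t)
      \<longlonglongrightarrow> real_of_int (ldeg (mtrace a))"
proof -
  have det: "mdet a = 1"
    using assms(1) by (simp add: centered_def)
  obtain p q where "p * fst \<xi> + q * snd \<xi> = 1"
    using lcoprime_imp_bezout[OF assms(4)] .
  then have "unimodular \<xi>"
    unfolding unimodular_def by blast
  moreover have "pvec_palindrome \<xi>"
    using assms(2,3) by (simp add: pvec_palindrome_def)
  ultimately have z: "unimodular (evolved_label a \<xi> t)" "pvec_palindrome (evolved_label a \<xi> t)"
    "evolved_label a \<xi> t \<noteq> 0" for t
    using det assms(1) by (simp_all add: unimodular_evolved_label pvec_palindrome_evolved_label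
        unimodular_nonzero)
  define D where "D t = halfwidth (evolved_label a \<xi> t)" for t
  have ent: "entanglement c (evolved_stab a \<xi> t) = enat (nat (D t))" for t
    using z by (simp add: D_def evolved_stab_eq_stab_labels[OF det] entanglement_stab_labels)
  have D_nonneg: "0 \<le> D t" for t
    using z by (simp add: D_def halfwidth_nonneg)
  have upper: "D (Suc (Suc t)) \<le> max (ldeg (mtrace a) + D (Suc t)) (D t)" for t
    unfolding D_def
    by (rule halfwidth_recurrence(1)[OF z(2) z(2) z(3) z(3) evolved_label_Suc_Suc[OF det]])
  have exact: "D (Suc (Suc t)) = ldeg (mtrace a) + D (Suc t)"
    if "0 < ldeg (mtrace a)" "D t < ldeg (mtrace a) + D (Suc t)" for t
    using that unfolding D_def
    by (rule halfwidth_recurrence(2)[OF z(2) z(2) z(3) z(3) evolved_label_Suc_Suc[OF det]])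
  obtain M where "\<forall>\<^sub>F t in sequentially. \<bar>D t - ldeg (mtrace a) * int t\<bar> \<le> M"
    using eventually_linear_growth[of "ldeg (mtrace a)" D, OF ldeg_nonneg D_nonneg upper exact] .
  then have "(\<lambda>t. real_of_int (D t) / real t) \<longlonglongrightarrow> real_of_int (ldeg (mtrace a))"
    by (rule tendsto_div_of_bounded_deviation)
  with ent D_nonneg show ?thesis
    by simp
qed

end
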